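(* Fix $P_1,P_2,Q,N_3>0$. Let $R^{\rm up}_G(N_2)$ denote the upper bound of Theorem 3 and $R^{\rm lo}_G(N_2)$ the lower bound of Theorem 4, i.e. $R^{\rm up}_G=\max_{\rho_{12},\varrho_{1s}}\min\{\tfrac12\log(1+P_1(1-\rho_{12}^2)(\tfrac1{N_2}+\tfrac1{N_3})),\ \tfrac12\log(1+\frac{(\sqrt{P_2}+\rho_{12}\sqrt{P_1})^2}{P_1(1-\rho_{12}^2-\varrho_{1s}^2)+(\sqrt{\Delta_Q}+\varrho_{1s}\sqrt{P_1})^2+N_3})+\tfrac12\log(1+\frac{P_1(1-\rho_{12}^2-\varrho_{1s}^2)}{N_3})\}$ with $\Delta_Q=QN_2/((\sqrt Q+\sqrt{P_1})^2+N_2)$, maximized over $\rho_{12}\in[0,1]$, $\varrho_{1s}\in[-1,0]$, $\rho_{12}^2+\varrho_{1s}^2\le1$; and $R^{\rm lo}_G=\max_{\gamma\in[0,1]}\frac12\log(1+\frac{(\sqrt{(1-\gamma)P_1}+\sqrt{P_2-D})^2}{N_3+D+\gamma P_1})$ with $D=P_2N_2/(N_2+\gamma P_1)$. Then as $N_2\to0$ both $R^{\rm up}_G(N_2)$ and $R^{\rm lo}_G(N_2)$ converge to $\frac12\log\Big(1+\frac{(\sqrt{P_1}+\sqrt{P_2})^2}{N_3}\Big)$; consequently the capacity of the Gaussian state-dependent relay channel with informed source equals $\frac12\log\big(1+\frac{(\sqrt{P_1}+\sqrt{P_2})^2}{N_3}\big)-o(1)$ with $o(1)\to0$ as $N_2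\to0$.
   Context: Gaussian state-dependent relay channel with informed source: $Y_{2,i}=X_{1,i}+S_i+Z_{2,i}$, $Y_{3,i}=X_{1,i}+X_{2,i}+S_i+Z_{3,i}$ with $S_i\sim\mathcal N(0,Q)$, $Z_{2,i}\sim\mathcal N(0,N_2)$, $Z_{3,i}\sim\mathcal N(0,N_3)$ i.i.d. and mutually independent; the state sequence is known non-causally only at the source; source encoder $X_1^n=\phi_1^n(W,S^n)$, relay encoders $X_{2,i}=\phi_{2,i}(Y_2^{i-1})$, decoder from $Y_3^n$; power constraints $\sum_iX_{1,i}^2\le nP_1$, $\sum_iX_{2,i}^2\le nP_2$; capacity is the supremum of rates with vanishing average error probability. Logarithms base 2. *)

theory Defs
  imports "HOL-Analysis.Analysis"
begin

definition DeltaQ :: "real \<Rightarrow> real \<Rightarrow> real \<Rightarrow> real" where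
  "DeltaQ P1 Q N2 = Q * N2 / ((sqrt Q + sqrt P1)^2 + N2)"

definition Rup_obj :: "real \<Rightarrow> real \<Rightarrow> real \<Rightarrow> real \<Rightarrow> real \<Rightarrow> real \<Rightarrow> real \<Rightarrow> real" where
  "Rup_obj P1 P2 Q N2 N3 r v =
     min ((1/2) * log 2 (1 + P1 * (1 - r^2) * (1/N2 + 1/N3)))
         ((1/2) * log 2 (1 + (sqrt P2 + r * sqrt P1)^2 /
              (P1 * (1 - r^2 - v^2) + (sqrt (DeltaQ P1 Q N2) + v * sqrt P1)^2 + N3))
          + (1/2) * log 2 (1 + P1 * (1 - r^2 - v^2) / N3))"

definition Rup_dom :: "(real \<times> real) set" where
  "Rup_dom = {(r, v). 0 \<le> r \<and> r \<le> 1 \<and> -1 \<le> v \<and> v \<le> 0 \<and> r^2 + v^2 \<le> 1}"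

text \<open>Upper bound R^up_G(N2) of Theorem 3 (maximum over a compact set, written as a supremum).\<close>
definition RupG :: "real \<Rightarrow> real \<Rightarrow> real \<Rightarrow> real \<Rightarrow> real \<Rightarrow> real" where
  "RupG P1 P2 Q N3 N2 = (SUP rv\<in>Rup_dom. Rup_obj P1 P2 Q N2 N3 (fst rv) (snd rv))"

definition Dlo :: "real \<Rightarrow> real \<Rightarrow> real \<Rightarrow> real \<Rightarrow> real" where
  "Dlo P1 P2 N2 \<gamma> = P2 * N2 / (N2 + \<gamma> * P1)"

definition Rlo_obj :: "real \<Rightarrow> real \<Rightarrow> real \<Rightarrow> real \<Rightarrow> real \<Rightarrow> real" where
  "Rlo_obj P1 P2 N2 N3 \<gamma> =
     (1/2) * log 2 (1 + (sqrt ((1 - \<gamma>) * P1) + sqrt (P2 - Dlo P1 P2 N2 \<gamma>))^2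
                     / (N3 + Dlo P1 P2 N2 \<gamma> + \<gamma> * P1))"

definition RloG :: "real \<Rightarrow> real \<Rightarrow> real \<Rightarrow> real \<Rightarrow> real" where
  "RloG P1 P2 N3 N2 = (SUP \<gamma>\<in>{0..1}. Rlo_obj P1 P2 N2 N3 \<gamma>)"

end

theory Submission
  imports Defs
begin

(*
  Let L = (1/2) log(1 + (sqrt P1 + sqrt P2)^2 / N3).  Both bounds are suprema of explicit objectives over a parameter set, so both limits
  are instances of one squeeze principle for suprema (tendsto_SUP_squeeze): it suffices
  to bound every objective value by some U(N2) with U(N2) -> L, and to exhibit, for each
  a < L, a single fixed parameter whose objective eventually exceeds a.

  Lower bound: every value of Rlo_obj is at most L, because removing the penalty terms
  D and gamma*P1 only enlarges the SNR.  For the witness, at N2 = 0 the objective tends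
  to L as gamma -> 0+, and for a fixed gamma > 0 it is continuous in N2 at 0.

  Upper bound: with Delta = DeltaQ, the sum of the two logarithms in Rup_obj is at most
  (1/2) log(1 + ((sqrt P1 + sqrt P2)^2 + Delta)/N3); this is an elementary inequality
  (Rup_sum_le).  Since Delta -> 0, this bounds RupG from above.  For the witness we take
  v = 0 and r close to 1: the cut-set term blows up like log(1/N2), while the sum term
  tends to a value close to L.

  The capacity statement then follows by the ordinary sandwich theorem.
*)

section \<open>A squeeze principle for parametrised suprema\<close>

lemma tendsto_SUP_squeeze:
  fixes f :: "'b \<Rightarrow> 'a \<Rightarrow> real"
  assumes upper: "\<forall>\<^sub>F N in F. \<forall>x\<in>A. f N x \<le> U N"
    and U: "(U \<longlongrightarrow> L) F"
    and lower: "\<And>a. a < L \<Longrightarrow> \<exists>x\<in>A. \<forall>\<^sub>F N in F. a < f N x"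
  shows "((\<lambda>N. SUP x\<in>A. f N x) \<longlongrightarrow> L) F"
proof (rule order_tendstoI)
  fix a assume "a < L"
  then obtain x where x: "x \<in> A" and ev: "\<forall>\<^sub>F N in F. a < f N x"
    using lower by blast
  from ev upper show "\<forall>\<^sub>F N in F. a < (SUP x\<in>A. f N x)"
  proof eventually_elim
    case (elim N)
    have "bdd_above (f N ` A)"
      using elim(2) by (intro bdd_aboveI2[where M = "U N"]) auto
    then have "f N x \<le> (SUP x\<in>A. f N x)"
      by (rule cSUP_upper[OF x])
    with elim(1) show ?case by linarith
  qed
next
  fix a assume "L < a"
  have nonempty: "A \<noteq> {}"
    using lower[of "L - 1"] by auto
  from upper order_tendstoD(2)[OF U \<open>L < a\<close>]
  show "\<forall>\<^sub>F N in F. (SUP x\<in>A. f N x) < a"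
  proof eventually_elim
    case (elim N)
    have "(SUP x\<in>A. f N x) \<le> U N"
      using elim(1) nonempty by (intro cSUP_least) auto
    with elim(2) show ?case by linarith
  qed
qed

lemma log_cutset_at_top:
  fixes K c :: real
  assumes "K > 0" "c \<ge> 0"
  shows "filterlim (\<lambda>N. (1/2) * log 2 (1 + K * (1/N + c))) at_top (at_right 0)"
proof -
  have "filterlim (\<lambda>N. c + inverse N) at_top (at_right 0)"
    by (rule filterlim_tendsto_add_at_top[OF tendsto_const filterlim_inverse_at_top_right])
  then have "filterlim (\<lambda>N. 1 + K * (1/N + c)) at_top (at_right (0::real))"
    by (intro filterlim_tendsto_add_at_top[OF tendsto_const]
        filterlim_tendsto_pos_mult_at_top[OF tendsto_const assms(1)])
       (simp add: inverse_eq_divide add.commute)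
  then have "filterlim (\<lambda>N. inverse (2 * ln 2) * ln (1 + K * (1/N + c))) at_top (at_right (0::real))"
    by (intro filterlim_tendsto_pos_mult_at_top[OF tendsto_const] filterlim_compose[OF ln_at_top]) auto
  then show ?thesis
    by (simp add: log_def field_simps)
qed

section \<open>The lower bound of Theorem 4\<close>

text \<open>Every value of the lower-bound objective is at most the limit value: the penalty
  \<open>D \<ge> 0\<close> and the split \<open>\<gamma>\<close> of the source power can only decrease the SNR.\<close>
lemma Rlo_obj_le:
  fixes P1 P2 N3 N2 \<gamma> :: real
  assumes "P1 > 0" "P2 > 0" "N3 > 0" "N2 > 0" "0 \<le> \<gamma>" "\<gamma> \<le> 1"
  shows "Rlo_obj P1 P2 N2 N3 \<gamma> \<le> (1/2) * log 2 (1 + (sqrt P1 + sqrt P2)^2 / N3)"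
proof -
  define D where "D = Dlo P1 P2 N2 \<gamma>"
  have D0: "0 \<le> D"
    using assms unfolding D_def Dlo_def by simp
  have D_le: "D \<le> P2"
    using assms unfolding D_def Dlo_def by (simp add: divide_le_eq mult_left_mono)
  have "sqrt ((1 - \<gamma>) * P1) + sqrt (P2 - D) \<le> sqrt P1 + sqrt P2"
    using assms D0 by (intro add_mono) (simp_all add: mult_le_cancel_right1)
  then have num: "(sqrt ((1 - \<gamma>) * P1) + sqrt (P2 - D))^2 \<le> (sqrt P1 + sqrt P2)^2"
    using D_le assms by (intro power_mono) auto
  have snr: "(sqrt ((1 - \<gamma>) * P1) + sqrt (P2 - D))^2 / (N3 + D + \<gamma> * P1) \<le> (sqrt P1 + sqrt P2)^2 / N3"
    using num D0 assms by (intro frac_le) auto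
  have "log 2 (1 + (sqrt ((1 - \<gamma>) * P1) + sqrt (P2 - D))^2 / (N3 + D + \<gamma> * P1))
     \<le> log 2 (1 + (sqrt P1 + sqrt P2)^2 / N3)"
    using snr D0 assms by (intro log_mono) (auto intro!: add_pos_nonneg divide_nonneg_pos)
  then show ?thesis
    unfolding Rlo_obj_def D_def by simp
qed

lemma Rlo_obj_noiseless_limit:
  fixes P1 P2 N3 :: real
  assumes "P1 \<ge> 0" "N3 > 0"
  shows "((\<lambda>\<gamma>. Rlo_obj P1 P2 0 N3 \<gamma>) \<longlongrightarrow> (1/2) * log 2 (1 + (sqrt P1 + sqrt P2)^2 / N3)) (at_right 0)"
proof -
  have obj: "Rlo_obj P1 P2 0 N3 \<gamma> =
      (1/2) * log 2 (1 + (sqrt ((1 - \<gamma>) * P1) + sqrt P2)^2 / (N3 + \<gamma> * P1))" for \<gamma>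
    unfolding Rlo_obj_def Dlo_def by simp
  have "0 < 1 + (sqrt P1 + sqrt P2)^2 / N3"
    using assms by (simp add: add_pos_nonneg)
  then have "((\<lambda>\<gamma>. (1/2) * log 2 (1 + (sqrt ((1 - \<gamma>) * P1) + sqrt P2)^2 / (N3 + \<gamma> * P1)))
       \<longlongrightarrow> (1/2) * log 2 (1 + (sqrt ((1 - 0) * P1) + sqrt P2)^2 / (N3 + 0 * P1))) (at_right 0)"
    using assms by (intro tendsto_intros) auto
  then show ?thesis
    unfolding obj by simp
qed

lemma Rlo_obj_continuous_N2:
  fixes P1 P2 N3 \<gamma> :: real
  assumes "P1 > 0" "N3 > 0" "0 < \<gamma>"
  shows "((\<lambda>N2. Rlo_obj P1 P2 N2 N3 \<gamma>) \<longlongrightarrow> Rlo_obj P1 P2 0 N3 \<gamma>) (at_right 0)"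
proof -
  have "0 < N3 + \<gamma> * P1"
    using assms by (simp add: add_pos_nonneg)
  moreover from this have "0 < 1 + (sqrt ((1 - \<gamma>) * P1) + sqrt P2)^2 / (N3 + \<gamma> * P1)"
    by (simp add: add_pos_nonneg)
  ultimately show ?thesis
    unfolding Rlo_obj_def Dlo_def using assms by (intro tendsto_intros) auto
qed

theorem RloG_limit:
  fixes P1 P2 N3 :: real
  assumes "P1 > 0" "P2 > 0" "N3 > 0"
  shows "((\<lambda>N2. RloG P1 P2 N3 N2) \<longlongrightarrow> (1/2) * log 2 (1 + (sqrt P1 + sqrt P2)^2 / N3)) (at_right 0)"
  unfolding RloG_def
proof (rule tendsto_SUP_squeeze[OF _ tendsto_const])
  show "\<forall>\<^sub>F N2 in at_right 0. \<forall>\<gamma>\<in>{0..1}. Rlo_obj P1 P2 N2 N3 \<gamma> \<le> (1/2) * log 2 (1 + (sqrt P1 + sqrt P2)^2 / N3)"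
    using eventually_at_right_less[of "0::real"]
    by (rule eventually_mono) (use Rlo_obj_le[OF assms] in auto)
next
  fix a assume "a < (1/2) * log 2 (1 + (sqrt P1 + sqrt P2)^2 / N3)"
  then have "\<forall>\<^sub>F \<gamma> in at_right 0. a < Rlo_obj P1 P2 0 N3 \<gamma>"
    by (rule order_tendstoD(1)[OF Rlo_obj_noiseless_limit[OF less_imp_le[OF assms(1)] assms(3)]])
  moreover have "\<forall>\<^sub>F \<gamma> in at_right 0. 0 < \<gamma> \<and> \<gamma> < (1::real)"
    using eventually_at_right_real[of 0 1] by simp
  ultimately have "\<forall>\<^sub>F \<gamma> in at_right 0. a < Rlo_obj P1 P2 0 N3 \<gamma> \<and> 0 < \<gamma> \<and> \<gamma> < 1"
    by (rule eventually_conj)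
  then obtain \<gamma> where \<gamma>: "a < Rlo_obj P1 P2 0 N3 \<gamma>" "0 < \<gamma>" "\<gamma> < 1"
    using eventually_happens'[OF trivial_limit_at_right_real] by blast
  have "\<forall>\<^sub>F N2 in at_right 0. a < Rlo_obj P1 P2 N2 N3 \<gamma>"
    using \<gamma> assms by (intro order_tendstoD(1)[OF Rlo_obj_continuous_N2]) auto
  with \<gamma> show "\<exists>\<gamma>\<in>{0..1}. \<forall>\<^sub>F N2 in at_right 0. a < Rlo_obj P1 P2 N2 N3 \<gamma>"
    by auto
qed

section \<open>The upper bound of Theorem 3\<close>

definition Rup_sum :: "real \<Rightarrow> real \<Rightarrow> real \<Rightarrow> real \<Rightarrow> real \<Rightarrow> real \<Rightarrow> real" where
  "Rup_sum P1 P2 N3 \<Delta> r v =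
     (1/2) * log 2 (1 + (sqrt P2 + r * sqrt P1)^2 /
        (P1 * (1 - r^2 - v^2) + (sqrt \<Delta> + v * sqrt P1)^2 + N3))
     + (1/2) * log 2 (1 + P1 * (1 - r^2 - v^2) / N3)"

lemma Rup_obj_eq:
  "Rup_obj P1 P2 Q N2 N3 r v =
     min ((1/2) * log 2 (1 + P1 * (1 - r^2) * (1/N2 + 1/N3))) (Rup_sum P1 P2 N3 (DeltaQ P1 Q N2) r v)"
  unfolding Rup_obj_def Rup_sum_def by simp

lemma DeltaQ_nonneg: "0 \<le> N2 \<Longrightarrow> 0 \<le> Q \<Longrightarrow> 0 \<le> DeltaQ P1 Q N2"
  unfolding DeltaQ_def by simp

lemma DeltaQ_tendsto_zero:
  fixes P1 Q :: real
  assumes "P1 > 0" "Q \<ge> 0"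
  shows "((\<lambda>N2. DeltaQ P1 Q N2) \<longlongrightarrow> 0) (at_right 0)"
proof -
  have "0 < sqrt Q + sqrt P1"
    using assms by (intro add_nonneg_pos) auto
  then have "(sqrt Q + sqrt P1)^2 + 0 \<noteq> 0"
    by simp
  then have "((\<lambda>N2. Q * N2 / ((sqrt Q + sqrt P1)^2 + N2)) \<longlongrightarrow> Q * 0 / ((sqrt Q + sqrt P1)^2 + 0)) (at_right 0)"
    by (intro tendsto_intros)
  then show ?thesis
    unfolding DeltaQ_def by simp
qed

text \<open>Power bookkeeping behind the upper bound: with \<open>p = \<surd>P1\<close>, \<open>q = \<surd>P2\<close>, \<open>d = \<surd>\<Delta>\<close>, the
  received signal power plus the power split off for decoding never exceeds the fully coherent
  power \<open>(p + q)\<^sup>2\<close> plus the leakage \<open>d\<^sup>2\<close>, because \<open>v \<le> 0\<close> and \<open>r \<le> 1\<close>.\<close>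
lemma coherent_power_bound:
  fixes p q d r v :: real
  assumes "0 \<le> p" "0 \<le> q" "0 \<le> d" "0 \<le> r" "r \<le> 1" "v \<le> 0"
  shows "p^2 * (1 - r^2 - v^2) + (d + v * p)^2 + (q + r * p)^2 \<le> (p + q)^2 + d^2"
proof -
  have "p^2 * (1 - r^2 - v^2) + (d + v * p)^2 + (q + r * p)^2
      = (p + q)^2 + d^2 + 2 * (v * (d * p)) - 2 * ((1 - r) * (p * q))"
    by (simp add: power2_eq_square algebra_simps)
  moreover have "v * (d * p) \<le> 0"
    using assms by (simp add: mult_nonpos_nonneg)
  moreover have "0 \<le> (1 - r) * (p * q)"
    using assms by simp
  ultimately show ?thesis by linarith
qed

text \<open>Two rates in series: \<open>log(1 + A/B) + log(1 + C/N) \<le> log((B + A)/N)\<close> whenever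
  \<open>B = C + E + N\<close> with \<open>E \<ge> 0\<close>, since then \<open>N + C \<le> B\<close>.\<close>
lemma log_sum_le:
  fixes A C E N :: real
  assumes "0 \<le> A" "0 \<le> C" "0 \<le> E" "0 < N"
  shows "(1/2) * log 2 (1 + A / (C + E + N)) + (1/2) * log 2 (1 + C / N)
         \<le> (1/2) * log 2 ((C + E + N + A) / N)"
proof -
  define B where "B = C + E + N"
  have B: "0 < B" "N + C \<le> B"
    using assms unfolding B_def by auto
  have pA: "0 < 1 + A / B" and pC: "0 < 1 + C / N"
    using assms B by (simp_all add: add_pos_nonneg)
  have "(1 + A / B) * (1 + C / N) = (B + A) * (N + C) / (B * N)"
    using B assms by (simp add: field_simps)
  also have "\<dots> \<le> (B + A) * B / (B * N)"
    using B assms by (intro divide_right_mono mult_left_mono) auto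
  also have "\<dots> = (B + A) / N"
    using B by simp
  finally have prod: "(1 + A / B) * (1 + C / N) \<le> (B + A) / N" .
  have "(1/2) * log 2 (1 + A / B) + (1/2) * log 2 (1 + C / N) = (1/2) * log 2 ((1 + A / B) * (1 + C / N))"
    using log_mult_pos[OF pA pC, of 2] by (simp add: distrib_left)
  also have "\<dots> \<le> (1/2) * log 2 ((B + A) / N)"
    using log_mono[OF _ mult_pos_pos[OF pA pC] prod] by simp
  finally show ?thesis
    unfolding B_def by (simp add: add.commute add.left_commute)
qed

lemma Rup_sum_le:
  fixes P1 P2 N3 \<Delta> r v :: real
  assumes "P1 > 0" "P2 > 0" "N3 > 0" "0 \<le> \<Delta>" "(r, v) \<in> Rup_dom"
  shows "Rup_sum P1 P2 N3 \<Delta> r v \<le> (1/2) * log 2 (1 + ((sqrt P1 + sqrt P2)^2 + \<Delta>) / N3)"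
proof -
  have dom: "0 \<le> r" "r \<le> 1" "v \<le> 0" "r^2 + v^2 \<le> 1"
    using assms(5) by (auto simp: Rup_dom_def)
  define A where "A = (sqrt P2 + r * sqrt P1)^2"
  define C where "C = P1 * (1 - r^2 - v^2)"
  define E where "E = (sqrt \<Delta> + v * sqrt P1)^2"
  have C0: "0 \<le> C"
    unfolding C_def using dom assms by simp
  have AE0: "0 \<le> A" "0 \<le> E"
    unfolding A_def E_def by simp_all
  have power: "C + E + A \<le> (sqrt P1 + sqrt P2)^2 + \<Delta>"
    using coherent_power_bound[of "sqrt P1" "sqrt P2" "sqrt \<Delta>" r v] dom assms
    unfolding A_def C_def E_def by simp
  have "Rup_sum P1 P2 N3 \<Delta> r v = (1/2) * log 2 (1 + A / (C + E + N3)) + (1/2) * log 2 (1 + C / N3)"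
    unfolding Rup_sum_def A_def C_def E_def ..
  also have "\<dots> \<le> (1/2) * log 2 ((C + E + N3 + A) / N3)"
    by (rule log_sum_le[OF AE0(1) C0 AE0(2) assms(3)])
  also have "\<dots> \<le> (1/2) * log 2 (1 + ((sqrt P1 + sqrt P2)^2 + \<Delta>) / N3)"
  proof -
    have "(C + E + N3 + A) / N3 \<le> (N3 + ((sqrt P1 + sqrt P2)^2 + \<Delta>)) / N3"
      using power assms by (intro divide_right_mono) auto
    also have "\<dots> = 1 + ((sqrt P1 + sqrt P2)^2 + \<Delta>) / N3"
      using assms by (simp add: add_divide_distrib)
    finally have "(C + E + N3 + A) / N3 \<le> 1 + ((sqrt P1 + sqrt P2)^2 + \<Delta>) / N3" .
    moreover have "0 < (C + E + N3 + A) / N3"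
      using C0 AE0 assms by (intro divide_pos_pos) auto
    ultimately show ?thesis
      by (simp add: log_mono)
  qed
  finally show ?thesis .
qed

lemma Rup_sum_coherent_limit:
  fixes P1 P2 N3 :: real
  assumes "P1 > 0" "N3 > 0"
  shows "((\<lambda>r. Rup_sum P1 P2 N3 0 r 0) \<longlongrightarrow> (1/2) * log 2 (1 + (sqrt P1 + sqrt P2)^2 / N3)) (at_left 1)"
proof -
  have "0 < 1 + (sqrt P2 + 1 * sqrt P1)^2 / (P1 * (1 - 1^2 - 0^2) + (sqrt 0 + 0 * sqrt P1)^2 + N3)"
    using assms by (simp add: add_pos_nonneg)
  then have "((\<lambda>r. Rup_sum P1 P2 N3 0 r 0) \<longlongrightarrow> Rup_sum P1 P2 N3 0 1 0) (at_left 1)"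
    unfolding Rup_sum_def using assms by (intro tendsto_intros) auto
  then show ?thesis
    unfolding Rup_sum_def by (simp add: add.commute)
qed

lemma Rup_sum_leakage_limit:
  fixes P1 P2 Q N3 r :: real
  assumes "P1 > 0" "Q \<ge> 0" "N3 > 0" "0 \<le> r" "r \<le> 1"
  shows "((\<lambda>N2. Rup_sum P1 P2 N3 (DeltaQ P1 Q N2) r 0) \<longlongrightarrow> Rup_sum P1 P2 N3 0 r 0) (at_right 0)"
proof -
  have r2: "r^2 \<le> 1"
    using assms by (simp add: power_le_one)
  then have "0 < P1 * (1 - r^2 - 0^2) + (sqrt 0 + 0 * sqrt P1)^2 + N3"
    using assms by (simp add: add_nonneg_pos)
  moreover from this have "0 < 1 + (sqrt P2 + r * sqrt P1)^2 / (P1 * (1 - r^2 - 0^2) + (sqrt 0 + 0 * sqrt P1)^2 + N3)"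
    by (simp add: add_pos_nonneg)
  moreover have "0 < 1 + P1 * (1 - r^2 - 0^2) / N3"
    using r2 assms by (simp add: add_pos_nonneg)
  ultimately show ?thesis
    unfolding Rup_sum_def by (intro tendsto_intros DeltaQ_tendsto_zero assms) auto
qed

theorem RupG_limit:
  fixes P1 P2 Q N3 :: real
  assumes "P1 > 0" "P2 > 0" "Q > 0" "N3 > 0"
  shows "((\<lambda>N2. RupG P1 P2 Q N3 N2) \<longlongrightarrow> (1/2) * log 2 (1 + (sqrt P1 + sqrt P2)^2 / N3)) (at_right 0)"
  unfolding RupG_def
proof (rule tendsto_SUP_squeeze)
  let ?U = "\<lambda>N2. (1/2) * log 2 (1 + ((sqrt P1 + sqrt P2)^2 + DeltaQ P1 Q N2) / N3)"
  show "\<forall>\<^sub>F N2 in at_right 0. \<forall>rv\<in>Rup_dom. Rup_obj P1 P2 Q N2 N3 (fst rv) (snd rv) \<le> ?U N2"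
    using eventually_at_right_less[of "0::real"]
  proof (rule eventually_mono, safe)
    fix N2 r v :: real
    assume "0 < N2" "(r, v) \<in> Rup_dom"
    then have "Rup_sum P1 P2 N3 (DeltaQ P1 Q N2) r v \<le> ?U N2"
      using assms by (intro Rup_sum_le) (auto intro: DeltaQ_nonneg)
    then show "Rup_obj P1 P2 Q N2 N3 (fst (r, v)) (snd (r, v)) \<le> ?U N2"
      unfolding Rup_obj_eq by simp
  qed
  have "0 < 1 + (sqrt P1 + sqrt P2)^2 / N3"
    using assms by (simp add: add_pos_nonneg)
  then have "(?U \<longlongrightarrow> (1/2) * log 2 (1 + ((sqrt P1 + sqrt P2)^2 + 0) / N3)) (at_right 0)"
    using assms by (intro tendsto_intros DeltaQ_tendsto_zero) auto
  then show "(?U \<longlongrightarrow> (1/2) * log 2 (1 + (sqrt P1 + sqrt P2)^2 / N3)) (at_right 0)"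
    by simp
next
  fix a assume "a < (1/2) * log 2 (1 + (sqrt P1 + sqrt P2)^2 / N3)"
  then have "\<forall>\<^sub>F r in at_left 1. a < Rup_sum P1 P2 N3 0 r 0"
    by (rule order_tendstoD(1)[OF Rup_sum_coherent_limit[OF assms(1,4)]])
  moreover have "\<forall>\<^sub>F r in at_left 1. 0 < r \<and> r < (1::real)"
    using eventually_at_left_real[of 0 1] by simp
  ultimately have "\<forall>\<^sub>F r in at_left 1. a < Rup_sum P1 P2 N3 0 r 0 \<and> 0 < r \<and> r < 1"
    by (rule eventually_conj)
  then obtain r where r: "a < Rup_sum P1 P2 N3 0 r 0" "0 < r" "r < 1"
    using eventually_happens'[OF trivial_limit_at_left_real] by blast
  then have r2: "r^2 < 1"
    by (simp add: abs_square_less_1)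
  have sum: "\<forall>\<^sub>F N2 in at_right 0. a < Rup_sum P1 P2 N3 (DeltaQ P1 Q N2) r 0"
    using r assms by (intro order_tendstoD(1)[OF Rup_sum_leakage_limit]) auto
  have cut: "\<forall>\<^sub>F N2 in at_right 0. a < (1/2) * log 2 (1 + P1 * (1 - r^2) * (1/N2 + 1/N3))"
    using log_cutset_at_top[of "P1 * (1 - r^2)" "1/N3"] r2 assms
    by (simp add: filterlim_at_top_dense)
  have "\<forall>\<^sub>F N2 in at_right 0. a < Rup_obj P1 P2 Q N2 N3 r 0"
    using cut sum by eventually_elim (simp add: Rup_obj_eq)
  moreover have "(r, 0) \<in> Rup_dom"
    using r r2 unfolding Rup_dom_def by auto
  ultimately show "\<exists>rv\<in>Rup_dom. \<forall>\<^sub>F N2 in at_right 0. a < Rup_obj P1 P2 Q N2 N3 (fst rv) (snd rv)"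
    by force
qed

theorem mainTheorem7:
  fixes P1 P2 Q N3 :: real
  assumes "P1 > 0" and "P2 > 0" and "Q > 0" and "N3 > 0"
  shows "((\<lambda>N2. RupG P1 P2 Q N3 N2) \<longlongrightarrow>
            (1/2) * log 2 (1 + (sqrt P1 + sqrt P2)^2 / N3)) (at_right 0)
       \<and> ((\<lambda>N2. RloG P1 P2 N3 N2) \<longlongrightarrow>
            (1/2) * log 2 (1 + (sqrt P1 + sqrt P2)^2 / N3)) (at_right 0)
       \<and> (\<forall>C :: real \<Rightarrow> real.
           (\<forall>N2>0. RloG P1 P2 N3 N2 \<le> C N2 \<and> C N2 \<le> RupG P1 P2 Q N3 N2) \<longrightarrow>
           (C \<longlongrightarrow> (1/2) * log 2 (1 + (sqrt P1 + sqrt P2)^2 / N3)) (at_right 0))"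
proof (intro conjI allI impI)
  note up = RupG_limit[OF assms] and lo = RloG_limit[OF assms(1,2,4)]
  show "((\<lambda>N2. RupG P1 P2 Q N3 N2) \<longlongrightarrow> (1/2) * log 2 (1 + (sqrt P1 + sqrt P2)^2 / N3)) (at_right 0)"
    by (rule up)
  show "((\<lambda>N2. RloG P1 P2 N3 N2) \<longlongrightarrow> (1/2) * log 2 (1 + (sqrt P1 + sqrt P2)^2 / N3)) (at_right 0)"
    by (rule lo)
  fix C :: "real \<Rightarrow> real"
  assume between: "\<forall>N2>0. RloG P1 P2 N3 N2 \<le> C N2 \<and> C N2 \<le> RupG P1 P2 Q N3 N2"
  then have "\<forall>\<^sub>F N2 in at_right 0. RloG P1 P2 N3 N2 \<le> C N2 \<and> C N2 \<le> RupG P1 P2 Q N3 N2"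
    using eventually_at_right_less[of "0::real"] by (auto elim: eventually_mono)
  then show "(C \<longlongrightarrow> (1/2) * log 2 (1 + (sqrt P1 + sqrt P2)^2 / N3)) (at_right 0)"
    by (intro tendsto_sandwich[OF _ _ lo up]) (auto elim: eventually_mono)
qed

end
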